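(* For $x,y\ge 1$ and $n>x+y$, the maximum possible number of edges in a task-dependency graph produced by the $(x,y)$ edge-removal process on $n$ vertices is $2n-x-y-2$.
   Context: A task-dependency graph is a finite directed acyclic graph (no loops, no multiple edges). A vertex is initial if it has in-degree $0$ and terminal if it has out-degree $0$ (an isolated vertex is both). The $(x,y)$ edge-removal process on $n$ vertices: start with the task-dependency graph on $\{1,\dots,n\}$ having all edges $(a,b)$ with $a<b$. Edges are removed uniformly at random, one at a time; a removal that would cause more than $x$ initial vertices or more than $y$ terminal vertices is cancelled. The process terminates when no further edge can be removed; the produced graph is the final graph (over all possible runs). *)

theory Defs
  imports Main
begin

definition initial_vertices :: "nat \<Rightarrow> (nat \<times> nat) set \<Rightarrow> nat set" where
  "initial_vertices n E = {v \<in> {1..n}. \<forall>u. (u, v) \<notin> E}"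

definition terminal_vertices :: "nat \<Rightarrow> (nat \<times> nat) set \<Rightarrow> nat set" where
  "terminal_vertices n E = {v \<in> {1..n}. \<forall>w. (v, w) \<notin> E}"

definition admissible :: "nat \<Rightarrow> nat \<Rightarrow> nat \<Rightarrow> (nat \<times> nat) set \<Rightarrow> bool" where
  "admissible x y n E \<longleftrightarrow>
     card (initial_vertices n E) \<le> x \<and> card (terminal_vertices n E) \<le> y"

definition full_dag :: "nat \<Rightarrow> (nat \<times> nat) set" where
  "full_dag n = {(a, b). 1 \<le> a \<and> a < b \<and> b \<le> n}"

text \<open>One successful (non-cancelled) removal step.\<close>
definition removal_step :: "nat \<Rightarrow> nat \<Rightarrow> nat \<Rightarrow> (nat \<times> nat) set \<Rightarrow> (nat \<times> nat) set \<Rightarrow> bool" where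
  "removal_step x y n E E' \<longleftrightarrow> (\<exists>e \<in> E. E' = E - {e} \<and> admissible x y n (E - {e}))"

definition final_graph :: "nat \<Rightarrow> nat \<Rightarrow> nat \<Rightarrow> (nat \<times> nat) set \<Rightarrow> bool" where
  "final_graph x y n E \<longleftrightarrow>
     (removal_step x y n)\<^sup>*\<^sup>* (full_dag n) E \<and> \<not> (\<exists>E'. removal_step x y n E E')"

end

theory Submission
  imports Defs
begin

(* Admissibility passes to supersets, so every admissible subgraph of the full DAG can be reached
   by successful removals; the final graphs are therefore the admissible subgraphs in which each
   edge is the sole in-edge of its head while exactly x vertices are initial, or the sole out-edge
   of its tail while exactly y vertices are terminal.
   If fewer than x vertices are initial, every edge is the sole out-edge of its tail, leaving at
   most n - 1 edges; dually for terminal vertices. Otherwise, counting each edge at its head when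
   it is the sole in-edge there and at its tail otherwise maps the edges injectively into the
   n - x non-initial plus the n - y non-terminal vertices, and any vertex that is neither initial
   nor terminal (one exists as n > x + y) forces two of these slots to stay unused.
   The bound is attained by the out-star from 1 to x+1, ..., n-1 together with the in-star
   from 2, ..., n-y to n. *)

lemma initial_vertices_eq: "initial_vertices n E = {1..n} - Range E"
  by (auto simp: initial_vertices_def)

lemma terminal_vertices_eq: "terminal_vertices n E = {1..n} - Domain E"
  by (auto simp: terminal_vertices_def)

lemma terminal_vertices_eq_initial_vertices_converse:
  "terminal_vertices n E = initial_vertices n (E\<inverse>)"
  by (simp add: initial_vertices_eq terminal_vertices_eq)

lemma card_initial_vertices:
  "Range E \<subseteq> {1..n} \<Longrightarrow> card (initial_vertices n E) = n - card (Range E)"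
  by (simp add: initial_vertices_eq card_Diff_subset finite_subset)

lemma card_terminal_vertices:
  "Domain E \<subseteq> {1..n} \<Longrightarrow> card (terminal_vertices n E) = n - card (Domain E)"
  by (simp add: terminal_vertices_eq card_Diff_subset finite_subset)

lemma admissible_mono:
  assumes "admissible x y n E" and "E \<subseteq> H"
  shows "admissible x y n H"
proof -
  have "initial_vertices n H \<subseteq> initial_vertices n E" "terminal_vertices n H \<subseteq> terminal_vertices n E"
    using assms(2) by (auto simp: initial_vertices_eq terminal_vertices_eq)
  then show ?thesis
    using assms(1) unfolding admissible_def initial_vertices_eq terminal_vertices_eq
    by (meson card_mono finite_Diff finite_atLeastAtMost le_trans)
qed

lemma Range_full_dag: "Range (full_dag n) = {2..n}"
  by (force simp: full_dag_def)

lemma Domain_full_dag: "Domain (full_dag n) = {1..<n}"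
  by (force simp: full_dag_def)

lemma finite_full_dag: "finite (full_dag n)"
  by (rule finite_subset[of _ "{1..n} \<times> {1..n}"]) (auto simp: full_dag_def)

lemma admissible_full_dag:
  assumes "1 \<le> x" and "1 \<le> y"
  shows "admissible x y n (full_dag n)"
proof -
  have "initial_vertices n (full_dag n) \<subseteq> {1}" "terminal_vertices n (full_dag n) \<subseteq> {n}"
    by (auto simp: initial_vertices_eq terminal_vertices_eq Range_full_dag Domain_full_dag)
  then have "card (initial_vertices n (full_dag n)) \<le> card {1::nat}"
    and "card (terminal_vertices n (full_dag n)) \<le> card {n}"
    by (meson card_mono finite.emptyI finite.insertI)+
  then show ?thesis
    using assms by (simp add: admissible_def)
qed

lemma removal_steps_subset_admissible:
  assumes "(removal_step x y n)\<^sup>*\<^sup>* E\<^sub>0 E" and "admissible x y n E\<^sub>0"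
  shows "E \<subseteq> E\<^sub>0 \<and> admissible x y n E"
  using assms by induction (auto simp: removal_step_def)

lemma removal_steps_to_admissible:
  assumes "finite D" and "admissible x y n F"
  shows "(removal_step x y n)\<^sup>*\<^sup>* (F \<union> D) F"
  using assms(1)
proof (induction D rule: finite_induct)
  case empty
  then show ?case by simp
next
  case (insert d D)
  show ?case
  proof (cases "d \<in> F")
    case True
    then show ?thesis using insert.IH by (simp add: insert_absorb)
  next
    case False
    then have "(F \<union> insert d D) - {d} = F \<union> D" using insert.hyps by auto
    then have "removal_step x y n (F \<union> insert d D) (F \<union> D)"
      using admissible_mono[OF assms(2)] by (auto simp: removal_step_def)
    then show ?thesis using insert.IH by (rule converse_rtranclp_into_rtranclp)
  qed
qed

lemma removal_steps_from_full_dag_iff: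
  assumes "1 \<le> x" and "1 \<le> y"
  shows "(removal_step x y n)\<^sup>*\<^sup>* (full_dag n) E \<longleftrightarrow> E \<subseteq> full_dag n \<and> admissible x y n E"
proof
  assume "(removal_step x y n)\<^sup>*\<^sup>* (full_dag n) E"
  then show "E \<subseteq> full_dag n \<and> admissible x y n E"
    using removal_steps_subset_admissible admissible_full_dag[OF assms] by blast
next
  assume "E \<subseteq> full_dag n \<and> admissible x y n E"
  then have "E \<union> (full_dag n - E) = full_dag n" and "admissible x y n E" by auto
  then show "(removal_step x y n)\<^sup>*\<^sup>* (full_dag n) E"
    using removal_steps_to_admissible[OF finite_Diff[OF finite_full_dag]] by metis
qed

definition sole_in_edges :: "('a \<times> 'a) set \<Rightarrow> ('a \<times> 'a) set" where
  "sole_in_edges E = {(a, b) \<in> E. E\<inverse> `` {b} = {a}}"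

definition sole_out_edges :: "('a \<times> 'a) set \<Rightarrow> ('a \<times> 'a) set" where
  "sole_out_edges E = {(a, b) \<in> E. E `` {a} = {b}}"

lemma sole_out_edges_eq_converse_sole_in_edges:
  "sole_out_edges E = (sole_in_edges (E\<inverse>))\<inverse>"
  by (auto simp: sole_in_edges_def sole_out_edges_def)

lemma single_valued_sole_out_edges: "single_valued (sole_out_edges E)"
  by (auto simp: sole_out_edges_def single_valued_def)

lemma single_valued_converse_sole_in_edges: "single_valued ((sole_in_edges E)\<inverse>)"
  by (auto simp: sole_in_edges_def single_valued_def)

lemma Range_Diff_edge:
  assumes "(a, b) \<in> E"
  shows "Range (E - {(a, b)}) = (if (a, b) \<in> sole_in_edges E then Range E - {b} else Range E)"
  using assms by (auto simp: sole_in_edges_def set_eq_iff)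

lemma card_initial_vertices_Diff_edge:
  assumes "Range E \<subseteq> {1..n}" and "(a, b) \<in> E"
  shows "card (initial_vertices n (E - {(a, b)})) =
    card (initial_vertices n E) + (if (a, b) \<in> sole_in_edges E then 1 else 0)"
proof -
  have "b \<in> Range E" using assms(2) by blast
  moreover have "finite (Range E)" using assms(1) finite_subset by blast
  moreover have "0 < card (Range E)" "card (Range E) \<le> n"
    using card_gt_0_iff card_mono[OF _ assms(1)] calculation by auto
  moreover have "Range (E - {(a, b)}) \<subseteq> {1..n}" using assms(1) by blast
  ultimately show ?thesis
    using assms by (simp add: card_initial_vertices Range_Diff_edge card_Diff_singleton Suc_diff_le)
qed

lemma card_terminal_vertices_Diff_edge:
  assumes "Domain E \<subseteq> {1..n}" and "(a, b) \<in> E"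
  shows "card (terminal_vertices n (E - {(a, b)})) =
    card (terminal_vertices n E) + (if (a, b) \<in> sole_out_edges E then 1 else 0)"
proof -
  have "(E - {(a, b)})\<inverse> = E\<inverse> - {(b, a)}" by auto
  then show ?thesis
    using card_initial_vertices_Diff_edge[of "E\<inverse>" n b a] assms
    by (simp add: terminal_vertices_eq_initial_vertices_converse sole_out_edges_eq_converse_sole_in_edges)
qed

lemma admissible_Diff_edge_iff:
  assumes "E \<subseteq> full_dag n" and "admissible x y n E" and "(a, b) \<in> E"
  shows "admissible x y n (E - {(a, b)}) \<longleftrightarrow>
    \<not> ((a, b) \<in> sole_in_edges E \<and> card (initial_vertices n E) = x) \<and>
    \<not> ((a, b) \<in> sole_out_edges E \<and> card (terminal_vertices n E) = y)"
proof -
  have "Range E \<subseteq> {1..n}" "Domain E \<subseteq> {1..n}"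
    using Range_mono[OF assms(1)] Domain_mono[OF assms(1)] by (auto simp: Range_full_dag Domain_full_dag)
  then show ?thesis
    using assms(2,3)
    by (auto simp: admissible_def card_initial_vertices_Diff_edge card_terminal_vertices_Diff_edge)
qed

lemma final_graph_iff:
  assumes "1 \<le> x" and "1 \<le> y"
  shows "final_graph x y n E \<longleftrightarrow> E \<subseteq> full_dag n \<and> admissible x y n E \<and>
    (\<forall>e \<in> E. e \<in> sole_in_edges E \<and> card (initial_vertices n E) = x \<or>
             e \<in> sole_out_edges E \<and> card (terminal_vertices n E) = y)"
    (is "_ \<longleftrightarrow> _ \<and> _ \<and> ?critical")
proof -
  have "(\<forall>e \<in> E. \<not> admissible x y n (E - {e})) \<longleftrightarrow> ?critical"
    if "E \<subseteq> full_dag n" and "admissible x y n E"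
    using admissible_Diff_edge_iff[OF that] by fast
  moreover have "(\<nexists>E'. removal_step x y n E E') \<longleftrightarrow> (\<forall>e \<in> E. \<not> admissible x y n (E - {e}))"
    unfolding removal_step_def by blast
  ultimately show ?thesis
    unfolding final_graph_def removal_steps_from_full_dag_iff[OF assms] by (meson conj_cong)
qed

lemma card_eq_card_Domain_if_single_valued:
  assumes "single_valued r"
  shows "card r = card (Domain r)"
proof -
  have "inj_on fst r"
    using assms by (auto intro!: inj_onI dest: single_valuedD)
  then show ?thesis
    by (simp add: card_image flip: fst_eq_Domain)
qed

lemma card_eq_card_Range_if_single_valued_converse:
  assumes "single_valued (r\<inverse>)"
  shows "card r = card (Range r)"
proof -
  have "inj_on snd r"
    using assms by (auto intro!: inj_onI dest: single_valuedD)
  then show ?thesis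
    by (simp add: card_image flip: snd_eq_Range)
qed

lemma not_in_Range_sole_in_edges:
  assumes "(a, b) \<in> E" and "(a', b) \<in> E" and "a \<noteq> a'"
  shows "b \<notin> Range (sole_in_edges E)"
proof -
  have "a \<in> E\<inverse> `` {b}" "a' \<in> E\<inverse> `` {b}"
    using assms by auto
  then have "E\<inverse> `` {b} \<noteq> {c}" for c
    using assms(3) by (metis singletonD)
  then show ?thesis
    by (auto simp: sole_in_edges_def)
qed

lemma card_eq_card_Range_add_card_Domain_if_sole_edges:
  assumes "finite E" and "E \<subseteq> sole_in_edges E \<union> sole_out_edges E"
  shows "card E = card (Range (sole_in_edges E)) + card (Domain (E - sole_in_edges E))"
proof -
  have "sole_in_edges E \<subseteq> E"
    by (auto simp: sole_in_edges_def)
  then have "card E = card (sole_in_edges E) + card (E - sole_in_edges E)"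
    using card_Int_Diff[OF assms(1), of "sole_in_edges E"] by (simp add: Int_absorb1)
  moreover have "card (sole_in_edges E) = card (Range (sole_in_edges E))"
    by (simp add: card_eq_card_Range_if_single_valued_converse single_valued_converse_sole_in_edges)
  moreover have "E - sole_in_edges E \<subseteq> sole_out_edges E"
    using assms(2) by blast
  then have "card (E - sole_in_edges E) = card (Domain (E - sole_in_edges E))"
    by (meson card_eq_card_Domain_if_single_valued single_valued_sole_out_edges single_valued_subset)
  ultimately show ?thesis
    by simp
qed

lemma not_in_Range_or_not_in_Domain_Diff_sole_in_edges:
  assumes "E \<subseteq> sole_in_edges E \<union> sole_out_edges E" and "(u, v) \<in> E"
  shows "v \<notin> Range (sole_in_edges E) \<or> u \<notin> Domain (E - sole_in_edges E)"
proof (cases "(u, v) \<in> sole_in_edges E")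
  case True
  have "(u, b) \<in> sole_in_edges E" if "(u, b) \<in> E" for b
  proof (rule ccontr)
    assume "(u, b) \<notin> sole_in_edges E"
    then have "(u, b) \<in> sole_out_edges E"
      using assms(1) that by blast
    then have "E `` {u} = {b}"
      by (simp add: sole_out_edges_def)
    then have "b = v"
      using assms(2) by (metis Image_singleton_iff singletonD)
    then show False
      using \<open>(u, b) \<notin> sole_in_edges E\<close> True by simp
  qed
  then have "u \<notin> Domain (E - sole_in_edges E)"
    by blast
  then show ?thesis ..
next
  case False
  then have "E\<inverse> `` {v} \<noteq> {u}"
    using assms(2) by (simp add: sole_in_edges_def)
  then obtain a where "(a, v) \<in> E" "a \<noteq> u"
    using assms(2) by blast
  then have "v \<notin> Range (sole_in_edges E)"
    using assms(2) by (metis not_in_Range_sole_in_edges)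
  then show ?thesis ..
qed

lemma not_in_Domain_Diff_sole_in_edges_or_other_not_in_Range:
  assumes "irrefl E" and "(v, w) \<in> E"
  shows "v \<notin> Domain (E - sole_in_edges E) \<or>
    (\<exists>b \<in> Range E. b \<noteq> v \<and> b \<notin> Range (sole_in_edges E))"
proof (cases "v \<in> Domain (E - sole_in_edges E)")
  case True
  then obtain b where "(v, b) \<in> E" and "(v, b) \<notin> sole_in_edges E"
    by blast
  then have "E\<inverse> `` {b} \<noteq> {v}"
    by (simp add: sole_in_edges_def)
  then obtain a where "(a, b) \<in> E" and "a \<noteq> v"
    using \<open>(v, b) \<in> E\<close> by blast
  then have "b \<notin> Range (sole_in_edges E)"
    using \<open>(v, b) \<in> E\<close> by (metis not_in_Range_sole_in_edges)
  moreover have "b \<noteq> v"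
    using assms(1) \<open>(v, b) \<in> E\<close> by (auto simp: irrefl_def)
  ultimately show ?thesis
    using \<open>(v, b) \<in> E\<close> by blast
qed simp

lemma card_add_two_le_card_Domain_add_card_Range:
  fixes E :: "('a \<times> 'a) set"
  assumes "finite E" and "irrefl E" and sole: "E \<subseteq> sole_in_edges E \<union> sole_out_edges E"
    and "v \<in> Domain E" and "v \<in> Range E"
  shows "card E + 2 \<le> card (Domain E) + card (Range E)"
proof -
  \<comment> \<open>Edges in C are counted at their heads, the others at their tails.\<close>
  define C where "C = sole_in_edges E"
  define free_heads where "free_heads = Range E - Range C"
  define free_tails where "free_tails = Domain E - Domain (E - C)"
  have "C \<subseteq> E"
    by (auto simp: C_def sole_in_edges_def)
  have fin: "finite (Domain E)" "finite (Range E)"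
    using \<open>finite E\<close> by (simp_all add: finite_Domain finite_Range)
  have "card (Range E) = card (Range C) + card free_heads"
    using card_Int_Diff[OF fin(2), of "Range C"] Range_mono[OF \<open>C \<subseteq> E\<close>]
    by (simp add: free_heads_def Int_absorb1)
  moreover have "card (Domain E) = card (Domain (E - C)) + card free_tails"
    using card_Int_Diff[OF fin(1), of "Domain (E - C)"] Domain_mono[of "E - C" E]
    by (simp add: free_tails_def Int_absorb1)
  moreover have "2 \<le> card (free_heads <+> free_tails)"
  proof -
    obtain u w where "(u, v) \<in> E" and "(v, w) \<in> E"
      using \<open>v \<in> Domain E\<close> \<open>v \<in> Range E\<close> by blast
    have "u \<noteq> v"
      using \<open>irrefl E\<close> \<open>(u, v) \<in> E\<close> by (auto simp: irrefl_def)
    have "Inl v \<in> free_heads <+> free_tails \<or> Inr u \<in> free_heads <+> free_tails"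
      using not_in_Range_or_not_in_Domain_Diff_sole_in_edges[OF sole \<open>(u, v) \<in> E\<close>]
        \<open>(u, v) \<in> E\<close> by (auto simp: free_heads_def free_tails_def C_def)
    moreover obtain q where "q \<in> free_heads <+> free_tails" "q \<noteq> Inl v" "q \<noteq> Inr u"
      using not_in_Domain_Diff_sole_in_edges_or_other_not_in_Range[OF \<open>irrefl E\<close> \<open>(v, w) \<in> E\<close>]
        \<open>(v, w) \<in> E\<close> \<open>u \<noteq> v\<close> by (auto simp: free_heads_def free_tails_def C_def)
    ultimately obtain p where "{p, q} \<subseteq> free_heads <+> free_tails" "p \<noteq> q"
      by blast
    moreover have "finite (free_heads <+> free_tails)"
      using fin by (simp add: free_heads_def free_tails_def)
    ultimately show ?thesis
      using card_mono[of "free_heads <+> free_tails" "{p, q}"] by simp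
  qed
  ultimately show ?thesis
    using card_eq_card_Range_add_card_Domain_if_sole_edges[OF \<open>finite E\<close> sole] fin
    by (simp add: card_Plus free_heads_def free_tails_def C_def)
qed

lemma Domain_Int_Range_nonempty:
  assumes "card (initial_vertices n E) + card (terminal_vertices n E) < n"
  shows "Domain E \<inter> Range E \<noteq> {}"
proof
  assume "Domain E \<inter> Range E = {}"
  then have "{1..n} = initial_vertices n E \<union> terminal_vertices n E"
    by (auto simp: initial_vertices_eq terminal_vertices_eq)
  then have "n \<le> card (initial_vertices n E) + card (terminal_vertices n E)"
    by (metis card_Un_le card_atLeastAtMost diff_Suc_1)
  with assms show False
    by linarith
qed

lemma card_add_two_le_if_subset_full_dag:
  assumes "E \<subseteq> full_dag n" and "E \<subseteq> sole_in_edges E \<union> sole_out_edges E"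
    and "card (initial_vertices n E) + card (terminal_vertices n E) < n"
  shows "card E + 2 \<le> card (Domain E) + card (Range E)"
proof -
  have "finite E"
    using assms(1) finite_full_dag finite_subset by blast
  moreover have "irrefl E"
    using assms(1) by (auto simp: irrefl_def full_dag_def)
  moreover obtain v where "v \<in> Domain E" and "v \<in> Range E"
    using Domain_Int_Range_nonempty[OF assms(3)] by blast
  ultimately show ?thesis
    using assms(2) by (intro card_add_two_le_card_Domain_add_card_Range)
qed

lemma card_le_if_final_graph:
  assumes "1 \<le> x" and "1 \<le> y" and "x + y < n" and "final_graph x y n E"
  shows "card E \<le> 2 * n - x - y - 2"
proof -
  from assms(4) have sub: "E \<subseteq> full_dag n" and adm: "admissible x y n E"
    and critical: "\<forall>e \<in> E. e \<in> sole_in_edges E \<and> card (initial_vertices n E) = x \<or>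
                           e \<in> sole_out_edges E \<and> card (terminal_vertices n E) = y"
    unfolding final_graph_iff[OF assms(1,2)] by blast+
  have "Range E \<subseteq> {2..n}" "Domain E \<subseteq> {1..<n}"
    using Range_mono[OF sub] Domain_mono[OF sub] by (simp_all add: Range_full_dag Domain_full_dag)
  then have card_I: "card (initial_vertices n E) = n - card (Range E)"
    and card_T: "card (terminal_vertices n E) = n - card (Domain E)"
    by (auto intro!: card_initial_vertices card_terminal_vertices)
  have card_Range: "card (Range E) < n" and card_Domain: "card (Domain E) < n"
    using card_mono[OF _ \<open>Range E \<subseteq> {2..n}\<close>] card_mono[OF _ \<open>Domain E \<subseteq> {1..<n}\<close>] assms(3)
    by auto
  consider "card (initial_vertices n E) < x" | "card (terminal_vertices n E) < y"
    | "card (initial_vertices n E) = x" "card (terminal_vertices n E) = y"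
    using adm unfolding admissible_def by linarith
  then show ?thesis
  proof cases
    case 1
    then have "E \<subseteq> sole_out_edges E"
      using critical by auto
    then have "card E = card (Domain E)"
      by (meson card_eq_card_Domain_if_single_valued single_valued_sole_out_edges single_valued_subset)
    then show ?thesis
      using card_Domain assms(3) by linarith
  next
    case 2
    then have "E\<inverse> \<subseteq> (sole_in_edges E)\<inverse>"
      using critical by auto
    then have "card E = card (Range E)"
      by (meson card_eq_card_Range_if_single_valued_converse single_valued_converse_sole_in_edges
          single_valued_subset)
    then show ?thesis
      using card_Range assms(3) by linarith
  next
    case 3
    have "E \<subseteq> sole_in_edges E \<union> sole_out_edges E"
      using critical by blast
    then have "card E + 2 \<le> card (Domain E) + card (Range E)"
      using card_add_two_le_if_subset_full_dag[OF sub] 3 assms(3) by simp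
    then show ?thesis
      using 3 card_I card_T card_Range card_Domain by linarith
  qed
qed

definition two_star_graph :: "nat \<Rightarrow> nat \<Rightarrow> nat \<Rightarrow> (nat \<times> nat) set" where
  "two_star_graph x y n = Pair 1 ` {x<..<n} \<union> (\<lambda>c. (c, n)) ` {1<..n - y}"

context
  fixes x y n :: nat
  assumes x: "1 \<le> x" and y: "1 \<le> y" and n: "x + y < n"
begin

lemma two_star_graph_subset_full_dag: "two_star_graph x y n \<subseteq> full_dag n"
  using x y by (auto simp: two_star_graph_def full_dag_def)

lemma Range_two_star_graph: "Range (two_star_graph x y n) = {x<..n}"
proof -
  have "Suc 1 \<in> {1<..n - y}"
    using x n by simp
  then have "Range (two_star_graph x y n) = {x<..<n} \<union> {n}"
    by (auto simp: two_star_graph_def Range_snd image_Un image_image)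
  also have "\<dots> = {x<..n}"
    using n by auto
  finally show ?thesis .
qed

lemma Domain_two_star_graph: "Domain (two_star_graph x y n) = {1..n - y}"
proof -
  have "Suc x \<in> {x<..<n}"
    using y n by simp
  then have "Domain (two_star_graph x y n) = {1} \<union> {1<..n - y}"
    by (auto simp: two_star_graph_def Domain_fst image_Un image_image)
  also have "\<dots> = {1..n - y}"
    using x y n by auto
  finally show ?thesis .
qed

lemma card_two_star_graph: "card (two_star_graph x y n) = 2 * n - x - y - 2"
proof -
  have "Pair (1::nat) ` {x<..<n} \<inter> (\<lambda>c. (c, n)) ` {1<..n - y} = {}"
    by auto
  then have "card (two_star_graph x y n) =
      card (Pair (1::nat) ` {x<..<n}) + card ((\<lambda>c. (c, n)) ` {1<..n - y})"
    unfolding two_star_graph_def by (simp add: card_Un_disjoint)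
  also have "\<dots> = card {x<..<n} + card {1<..n - y}"
    by (simp add: card_image inj_on_def)
  finally show ?thesis
    using n by simp
qed

lemma two_star_graph_subset_sole_edges:
  "two_star_graph x y n \<subseteq>
    sole_in_edges (two_star_graph x y n) \<union> sole_out_edges (two_star_graph x y n)"
proof -
  have "Pair 1 ` {x<..<n} \<subseteq> sole_in_edges (two_star_graph x y n)"
    by (auto simp: sole_in_edges_def two_star_graph_def)
  moreover have "(\<lambda>c. (c, n)) ` {1<..n - y} \<subseteq> sole_out_edges (two_star_graph x y n)"
    by (auto simp: sole_out_edges_def two_star_graph_def)
  ultimately show ?thesis
    by (auto simp: two_star_graph_def)
qed

lemma final_graph_two_star_graph: "final_graph x y n (two_star_graph x y n)"
proof -
  have "Range (two_star_graph x y n) \<subseteq> {1..n}" "Domain (two_star_graph x y n) \<subseteq> {1..n}"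
    by (auto simp: Range_two_star_graph Domain_two_star_graph)
  then have "card (initial_vertices n (two_star_graph x y n)) = x"
    and "card (terminal_vertices n (two_star_graph x y n)) = y"
    using n by (simp_all add: card_initial_vertices card_terminal_vertices
        Range_two_star_graph Domain_two_star_graph)
  then show ?thesis
    using two_star_graph_subset_sole_edges
    by (auto simp: final_graph_iff[OF x y] admissible_def two_star_graph_subset_full_dag)
qed

end

theorem mainTheorem7:
  fixes x y n :: nat
  assumes "x \<ge> 1" and "y \<ge> 1" and "n > x + y"
  shows "(\<exists>E. final_graph x y n E \<and> card E = 2 * n - x - y - 2) \<and>
         (\<forall>E. final_graph x y n E \<longrightarrow> card E \<le> 2 * n - x - y - 2)"
  using final_graph_two_star_graph[OF assms] card_two_star_graph[OF assms]
    card_le_if_final_graph[OF assms]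
  by blast

end
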